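(* Let $\alpha\in(0,1]$ and let $n$ be such that $n^\alpha=2^q$ for a positive integer $q$. Let $R\subset\mathrm{conv}(A_n)$ be an open axis-aligned rectangle such that either [$w(R)>1$ and $h(R)>n^\alpha$] or [$w(R)>n^\alpha$ and $h(R)>1$]. Then $R$ contains a point of $B_n$ lying on a forward diagonal and a point of $B_n$ lying on a backward diagonal.
   Context: Let $A_n=\{(i,j)\in\mathbb{Z}^2: 0\le i,j\le 14n\}$, so $\mathrm{conv}(A_n)=[0,14n]^2$. The sparse grid $B_n\subseteq A_n$ is the set of points of $A_n$ of at least one of the following forms: (1) $(i,j)$ with $n^\alpha \mid ij$; (2) $(i+k,j+k)$ with $n^\alpha\mid i$, $n^\alpha\mid j$, $k\in\{1,\dots,n^\alpha\}$; (3) $(i+k,j-k)$ with $n^\alpha\mid i$, $n^\alpha\mid j$, $k\in\{1,\dots,n^\alpha\}$. A point of $A_n$ of form (2) is said to lie on a forward diagonal, and a point of $A_n$ of form (3) on a backward diagonal. For an open rectangle $R=(x_1,x_2)\times(y_1,y_2)$, $w(R)=x_2-x_1$ and $h(R)=y_2-y_1$. *)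

theory Defs
  imports Complex_Main
begin

definition gridA :: "nat \<Rightarrow> (int \<times> int) set" where
  "gridA n = {(i, j). 0 \<le> i \<and> i \<le> 14 * int n \<and> 0 \<le> j \<and> j \<le> 14 * int n}"

text \<open>Points of A_n on a forward diagonal; N plays the role of the integer n^alpha.\<close>
definition fwd_diag :: "nat \<Rightarrow> nat \<Rightarrow> (int \<times> int) set" where
  "fwd_diag N n = {p \<in> gridA n. \<exists>i j k. int N dvd i \<and> int N dvd j \<and> k \<in> {1..int N}
                                     \<and> p = (i + k, j + k)}"

definition bwd_diag :: "nat \<Rightarrow> nat \<Rightarrow> (int \<times> int) set" where
  "bwd_diag N n = {p \<in> gridA n. \<exists>i j k. int N dvd i \<and> int N dvd j \<and> k \<in> {1..int N}
                                     \<and> p = (i + k, j - k)}"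

definition sparseB :: "nat \<Rightarrow> nat \<Rightarrow> (int \<times> int) set" where
  "sparseB N n = {p \<in> gridA n. int N dvd (fst p * snd p)} \<union> fwd_diag N n \<union> bwd_diag N n"

definition to_real_pt :: "int \<times> int \<Rightarrow> real \<times> real" where
  "to_real_pt p = (real_of_int (fst p), real_of_int (snd p))"

end

theory Submission
  imports Defs
begin

text \<open>A forward diagonal point is exactly a grid point with \<open>i \<equiv> j (mod N)\<close>, a backward
  diagonal point one with \<open>i \<equiv> -j (mod N)\<close>. An open rectangle of size more than \<open>1 \<times> N\<close>
  (or \<open>N \<times> 1\<close>) contains an integer point in its short direction, and its long side, of
  length more than \<open>N\<close>, contains an integer in any prescribed residue class mod \<open>N\<close>.\<close>

lemma exists_int_in_interval_cong:
  fixes u v :: real and N c :: int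
  assumes "N \<ge> 1" "v - u > N"
  shows "\<exists>t::int. u < t \<and> t < v \<and> N dvd (t - c)"
proof -
  define r where "r = (c - \<lfloor>u\<rfloor> - 1) mod N"
  define t where "t = \<lfloor>u\<rfloor> + 1 + r"
  have "0 \<le> r" "r < N" using assms(1) by (simp_all add: r_def)
  then have "u < t" "t < v" using assms(2) unfolding t_def by linarith+
  moreover have "N dvd (t - c)"
  proof -
    have "N dvd r - (c - \<lfloor>u\<rfloor> - 1)" by (simp add: r_def mod_eq_dvd_iff[symmetric])
    moreover have "t - c = r - (c - \<lfloor>u\<rfloor> - 1)" by (simp add: t_def)
    ultimately show ?thesis by metis
  qed
  ultimately show ?thesis by blast
qed

lemma int_eq_mult_plus_offset:
  fixes a :: int and N :: nat
  assumes "N \<ge> 1"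
  shows "\<exists>i k. int N dvd i \<and> k \<in> {1..int N} \<and> a = i + k"
proof -
  define k where "k = (a - 1) mod int N + 1"
  have "0 \<le> (a - 1) mod int N" "(a - 1) mod int N < int N" using assms by simp_all
  then have "k \<in> {1..int N}" by (simp add: k_def)
  moreover have "int N dvd (a - 1) - (a - 1) mod int N" by (simp add: mod_eq_dvd_iff[symmetric])
  then have "int N dvd a - k" by (simp add: k_def algebra_simps)
  ultimately show ?thesis by (intro exI[of _ "a - k"] exI[of _ k]) simp
qed

lemma fwd_diag_eq:
  assumes "N \<ge> 1"
  shows "fwd_diag N n = {p \<in> gridA n. int N dvd (fst p - snd p)}"
proof (intro set_eqI iffI)
  fix p assume "p \<in> fwd_diag N n"
  then show "p \<in> {p \<in> gridA n. int N dvd (fst p - snd p)}"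
    unfolding fwd_diag_def by (auto simp: dvd_diff)
next
  fix p assume p: "p \<in> {p \<in> gridA n. int N dvd (fst p - snd p)}"
  obtain i k where ik: "int N dvd i" "k \<in> {1..int N}" "fst p = i + k"
    using int_eq_mult_plus_offset[OF assms] by blast
  have "int N dvd i - (fst p - snd p)" using ik(1) p by (simp add: dvd_diff)
  moreover have "snd p - k = i - (fst p - snd p)" using ik(3) by simp
  ultimately have "int N dvd (snd p - k)" by metis
  then show "p \<in> fwd_diag N n"
    unfolding fwd_diag_def using p ik
    by (intro CollectI conjI exI[of _ i] exI[of _ "snd p - k"] exI[of _ k]) (auto simp: prod_eq_iff)
qed

lemma bwd_diag_eq:
  assumes "N \<ge> 1"
  shows "bwd_diag N n = {p \<in> gridA n. int N dvd (fst p + snd p)}"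
proof (intro set_eqI iffI)
  fix p assume "p \<in> bwd_diag N n"
  then show "p \<in> {p \<in> gridA n. int N dvd (fst p + snd p)}"
    unfolding bwd_diag_def by auto
next
  fix p assume p: "p \<in> {p \<in> gridA n. int N dvd (fst p + snd p)}"
  obtain i k where ik: "int N dvd i" "k \<in> {1..int N}" "fst p = i + k"
    using int_eq_mult_plus_offset[OF assms] by blast
  have "int N dvd (fst p + snd p) - i" using ik(1) p by (simp add: dvd_diff)
  moreover have "snd p + k = (fst p + snd p) - i" using ik(3) by simp
  ultimately have "int N dvd (snd p + k)" by metis
  then show "p \<in> bwd_diag N n"
    unfolding bwd_diag_def using p ik
    by (intro CollectI conjI exI[of _ i] exI[of _ "snd p + k"] exI[of _ k]) (auto simp: prod_eq_iff)
qed

lemma rectangle_contains_int_point_cong: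
  fixes x1 x2 y1 y2 :: real and N \<sigma> :: int
  assumes "N \<ge> 1" "\<sigma> * \<sigma> = 1"
    and "(x2 - x1 > 1 \<and> y2 - y1 > N) \<or> (x2 - x1 > N \<and> y2 - y1 > 1)"
  shows "\<exists>a b. x1 < real_of_int a \<and> real_of_int a < x2 \<and> y1 < real_of_int b \<and> real_of_int b < y2 \<and>
           N dvd (a - \<sigma> * b)"
  using assms(3)
proof
  assume h: "x2 - x1 > 1 \<and> y2 - y1 > N"
  obtain a :: int where a: "x1 < a" "a < x2"
    using exists_int_in_interval_cong[where u = x1 and v = x2 and N = 1 and c = 0] h by auto
  obtain b :: int where b: "y1 < b" "b < y2" "N dvd (b - \<sigma> * a)"
    using exists_int_in_interval_cong[OF assms(1), where u = y1 and v = y2 and c = "\<sigma> * a"] h by auto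
  have "a - \<sigma> * b = - \<sigma> * (b - \<sigma> * a)" using assms(2) by (simp add: algebra_simps)
  then have "N dvd (a - \<sigma> * b)" using b(3) by simp
  with a b show ?thesis by blast
next
  assume h: "x2 - x1 > N \<and> y2 - y1 > 1"
  obtain b :: int where b: "y1 < b" "b < y2"
    using exists_int_in_interval_cong[where u = y1 and v = y2 and N = 1 and c = 0] h by auto
  obtain a :: int where "x1 < a" "a < x2" "N dvd (a - \<sigma> * b)"
    using exists_int_in_interval_cong[OF assms(1), where u = x1 and v = x2 and c = "\<sigma> * b"] h by auto
  with b show ?thesis by blast
qed

lemma int_point_in_rectangle_in_gridA:
  assumes "{x1<..<x2} \<times> {y1<..<y2} \<subseteq> {0..14 * real n} \<times> {0..14 * real n}"
    and "to_real_pt p \<in> {x1<..<x2} \<times> {y1<..<y2}"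
  shows "p \<in> gridA n"
proof -
  have "to_real_pt p \<in> {0..14 * real n} \<times> {0..14 * real n}"
    using assms by (rule subsetD)
  then have "0 \<le> real_of_int (fst p)" "real_of_int (fst p) \<le> real_of_int (14 * int n)"
    "0 \<le> real_of_int (snd p)" "real_of_int (snd p) \<le> real_of_int (14 * int n)"
    by (simp_all add: to_real_pt_def mem_Times_iff)
  then show ?thesis unfolding gridA_def of_int_le_iff by (simp add: case_prod_beta)
qed

lemma diagonal_point_in_rectangle:
  fixes x1 x2 y1 y2 :: real and N :: nat and \<sigma> :: int
  assumes "N \<ge> 1" "\<sigma> * \<sigma> = 1"
    and "{x1<..<x2} \<times> {y1<..<y2} \<subseteq> {0..14 * real n} \<times> {0..14 * real n}"
    and "(x2 - x1 > 1 \<and> y2 - y1 > N) \<or> (x2 - x1 > N \<and> y2 - y1 > 1)"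
  shows "\<exists>p \<in> gridA n. int N dvd (fst p - \<sigma> * snd p) \<and>
           to_real_pt p \<in> {x1<..<x2} \<times> {y1<..<y2}"
proof -
  have "int N \<ge> 1" using assms(1) by simp
  moreover have "(x2 - x1 > 1 \<and> y2 - y1 > real_of_int (int N)) \<or>
                 (x2 - x1 > real_of_int (int N) \<and> y2 - y1 > 1)"
    using assms(4) by simp
  ultimately obtain a b where
    ab: "x1 < real_of_int a" "real_of_int a < x2" "y1 < real_of_int b" "real_of_int b < y2"
        "int N dvd (a - \<sigma> * b)"
    using rectangle_contains_int_point_cong[OF _ assms(2)] by blast
  then have "to_real_pt (a, b) \<in> {x1<..<x2} \<times> {y1<..<y2}" by (simp add: to_real_pt_def)
  moreover have "(a, b) \<in> gridA n"
    using int_point_in_rectangle_in_gridA[OF assms(3) calculation] .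
  ultimately show ?thesis using ab(5) by (intro bexI[of _ "(a, b)"]) simp_all
qed

theorem lemma5:
  fixes \<alpha> :: real and n q :: nat and x1 x2 y1 y2 :: real
  assumes "0 < \<alpha>" and "\<alpha> \<le> 1"
    and "q \<ge> 1" and "real n powr \<alpha> = 2 ^ q"
    and "x1 < x2" and "y1 < y2"
    and "{x1<..<x2} \<times> {y1<..<y2} \<subseteq> {0..14 * real n} \<times> {0..14 * real n}"
    and "(x2 - x1 > 1 \<and> y2 - y1 > real n powr \<alpha>) \<or> (x2 - x1 > real n powr \<alpha> \<and> y2 - y1 > 1)"
  shows "(\<exists>p \<in> sparseB (2 ^ q) n. p \<in> fwd_diag (2 ^ q) n \<and>
             to_real_pt p \<in> {x1<..<x2} \<times> {y1<..<y2}) \<and>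
         (\<exists>p \<in> sparseB (2 ^ q) n. p \<in> bwd_diag (2 ^ q) n \<and>
             to_real_pt p \<in> {x1<..<x2} \<times> {y1<..<y2})"
proof -
  define N :: nat where "N = 2 ^ q"
  have "N \<ge> 1" by (simp add: N_def)
  have side: "(x2 - x1 > 1 \<and> y2 - y1 > N) \<or> (x2 - x1 > N \<and> y2 - y1 > 1)"
    using assms(4,8) by (simp add: N_def)
  obtain p where p: "p \<in> gridA n" "int N dvd (fst p - 1 * snd p)"
      "to_real_pt p \<in> {x1<..<x2} \<times> {y1<..<y2}"
    using diagonal_point_in_rectangle[OF \<open>N \<ge> 1\<close> _ assms(7) side, of 1] by auto
  obtain p' where p': "p' \<in> gridA n" "int N dvd (fst p' - (-1) * snd p')"
      "to_real_pt p' \<in> {x1<..<x2} \<times> {y1<..<y2}"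
    using diagonal_point_in_rectangle[OF \<open>N \<ge> 1\<close> _ assms(7) side, of "-1"] by auto
  have fwd: "p \<in> fwd_diag N n" using p(1,2) by (simp add: fwd_diag_eq[OF \<open>N \<ge> 1\<close>])
  have bwd: "p' \<in> bwd_diag N n" using p'(1,2) by (simp add: bwd_diag_eq[OF \<open>N \<ge> 1\<close>])
  have "p \<in> sparseB N n" "p' \<in> sparseB N n" using fwd bwd unfolding sparseB_def by blast+
  with fwd bwd p(3) p'(3) show ?thesis unfolding N_def by (intro conjI bexI)
qed

end
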